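(* For every $c,c'\in\mathbb{C}$ we have $|r_{\mathrm{bif}}(c)-r_{\mathrm{bif}}(c')|\le|c-c'|$; that is, $r_{\mathrm{bif}}:\mathbb{C}\to[0,\infty)$ is $1$-Lipschitz.
   Context: $f_c(z)=z^2+c$, extended to $\widehat{\mathbb{C}}$ by $f_c(\infty)=\infty$. For $c\in\mathbb{C}$, $r\ge0$, $G_{c,r}$ is the semigroup under composition generated by $\{f_{c'}:|c'-c|\le r\}$. A minimal set of a polynomial semigroup $G$ is a minimal element, with respect to inclusion, of the family of non-empty compact $L\subset\widehat{\mathbb{C}}$ with $g(L)\subset L$ for all $g\in G$; it is planar if $\infty\notin L$. The bifurcation radius $r_{\mathrm{bif}}(c)$ is the supremum of those $r\ge0$ for which $G_{c,r}$ has a planar minimal set (equivalently the infimum of those $r\ge0$ for which $G_{c,r}$ has no planar minimal set); by prior work this value is attained and $G_{c,r}$ has a planar minimal set iff $r\le r_{\mathrm{bif}}(c)$. *)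

theory Defs
  imports "HOL-Analysis.Analysis"
begin

text \<open>The Riemann sphere is modelled as complex option: Some z is the point z,
  None is the point at infinity.\<close>

type_synonym csphere = "complex option"

text \<open>Compactness in the one-point compactification: a set is compact iff either
  it avoids infinity and its finite part is compact in the plane, or it contains
  infinity and its finite part is closed in the plane.\<close>
definition sphere_compact :: "csphere set \<Rightarrow> bool" where
  "sphere_compact L \<longleftrightarrow>
     (None \<notin> L \<and> compact (Some -` L)) \<or> (None \<in> L \<and> closed (Some -` L))"

definition fhat :: "complex \<Rightarrow> csphere \<Rightarrow> csphere" where
  "fhat c = map_option (\<lambda>z. z ^ 2 + c)"

inductive_set gen_semigroup :: "('a \<Rightarrow> 'a) set \<Rightarrow> ('a \<Rightarrow> 'a) set"
  for S :: "('a \<Rightarrow> 'a) set" where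
  gen: "g \<in> S \<Longrightarrow> g \<in> gen_semigroup S"
| comp: "f \<in> gen_semigroup S \<Longrightarrow> g \<in> gen_semigroup S \<Longrightarrow> f \<circ> g \<in> gen_semigroup S"

definition Gcr :: "complex \<Rightarrow> real \<Rightarrow> (csphere \<Rightarrow> csphere) set" where
  "Gcr c r = gen_semigroup {fhat c' | c'. cmod (c' - c) \<le> r}"

definition invariant_compact :: "(csphere \<Rightarrow> csphere) set \<Rightarrow> csphere set \<Rightarrow> bool" where
  "invariant_compact G L \<longleftrightarrow> L \<noteq> {} \<and> sphere_compact L \<and> (\<forall>g\<in>G. g ` L \<subseteq> L)"

definition minimal_set :: "(csphere \<Rightarrow> csphere) set \<Rightarrow> csphere set \<Rightarrow> bool" where
  "minimal_set G L \<longleftrightarrow> invariant_compact G L \<and>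
     (\<forall>L'. invariant_compact G L' \<and> L' \<subseteq> L \<longrightarrow> L' = L)"

definition planar_minimal_set :: "(csphere \<Rightarrow> csphere) set \<Rightarrow> csphere set \<Rightarrow> bool" where
  "planar_minimal_set G L \<longleftrightarrow> minimal_set G L \<and> None \<notin> L"

definition r_bif :: "complex \<Rightarrow> real" where
  "r_bif c = Sup {r. r \<ge> 0 \<and> (\<exists>L. planar_minimal_set (Gcr c r) L)}"

end

theory Submission
  imports Defs
begin

text \<open>A planar minimal set of \<open>G\<^sub>c\<^sub>,\<^sub>r\<close> exists iff some nonempty compact
  \<open>K \<subseteq> \<complex>\<close> satisfies \<open>K\<^sup>2 + a \<subseteq> K\<close> for all \<open>|a - c| \<le> r\<close>: a minimal such \<open>K\<close> is obtained
  from Zorn's lemma, since chains of nonempty compacta have nonempty compact intersection.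
  By the triangle inequality a set that works for \<open>(c, r)\<close> also works for
  \<open>(c', r - |c - c'|)\<close>, so \<open>r\<^sub>b\<^sub>i\<^sub>f(c) \<le> r\<^sub>b\<^sub>i\<^sub>f(c') + |c - c'|\<close>. The supremum is of a
  nonempty set (a fixed point of \<open>f\<^sub>c\<close> works for \<open>r = 0\<close>) that is bounded, because the
  point \<open>z\<close> of \<open>K\<close> of largest modulus forces \<open>r \<le> |z| \<le> 1 + |c|\<close>.\<close>

lemma gen_semigroup_image_subset_iff:
  "(\<forall>g\<in>gen_semigroup S. g ` L \<subseteq> L) \<longleftrightarrow> (\<forall>s\<in>S. s ` L \<subseteq> L)"
proof
  assume gens: "\<forall>s\<in>S. s ` L \<subseteq> L"
  show "\<forall>g\<in>gen_semigroup S. g ` L \<subseteq> L"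
  proof
    fix g assume "g \<in> gen_semigroup S"
    then show "g ` L \<subseteq> L"
    proof (induction rule: gen_semigroup.induct)
      case (gen g)
      then show ?case using gens by blast
    next
      case (comp f g)
      then show ?case by (auto simp flip: image_comp)
    qed
  qed
qed (auto intro: gen_semigroup.gen)

definition compact_invariant :: "('a::topological_space \<Rightarrow> 'a) set \<Rightarrow> 'a set \<Rightarrow> bool" where
  "compact_invariant F K \<longleftrightarrow> K \<noteq> {} \<and> compact K \<and> (\<forall>f\<in>F. f ` K \<subseteq> K)"

lemma compact_invariant_mono:
  "compact_invariant F K \<Longrightarrow> F' \<subseteq> F \<Longrightarrow> compact_invariant F' K"
  unfolding compact_invariant_def by blast

lemma compact_invariant_Inter_chain:
  fixes F :: "('a::heine_borel \<Rightarrow> 'a) set"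
  assumes "\<C> \<noteq> {}" "\<And>K. K \<in> \<C> \<Longrightarrow> compact_invariant F K"
    and "\<And>K K'. K \<in> \<C> \<Longrightarrow> K' \<in> \<C> \<Longrightarrow> K \<subseteq> K' \<or> K' \<subseteq> K"
  shows "compact_invariant F (\<Inter>\<C>)"
  unfolding compact_invariant_def
proof (intro conjI)
  show "\<Inter>\<C> \<noteq> {}"
    by (rule compact_chain) (use assms in \<open>auto simp: compact_invariant_def\<close>)
  show "compact (\<Inter>\<C>)"
    by (rule compact_Inter) (use assms in \<open>auto simp: compact_invariant_def\<close>)
  show "\<forall>f\<in>F. f ` \<Inter>\<C> \<subseteq> \<Inter>\<C>"
    using assms(2) by (fastforce simp: compact_invariant_def)
qed

lemma compact_invariant_minimal_exists:
  fixes F :: "('a::heine_borel \<Rightarrow> 'a) set"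
  assumes "compact_invariant F K"
  obtains M where "compact_invariant F M"
    and "\<And>M'. compact_invariant F M' \<Longrightarrow> M' \<subseteq> M \<Longrightarrow> M' = M"
proof -
  define A where "A = {K. compact_invariant F K}"
  have "\<exists>M\<in>A. \<forall>M'\<in>A. M' \<subseteq> M \<longrightarrow> M' = M"
  proof (rule predicate_Zorn)
    show "partial_order_on A (relation_of (\<lambda>X Y. Y \<subseteq> X) A)"
      by (rule partial_order_on_relation_ofI) auto
  next
    fix \<C> assume \<C>: "\<C> \<in> Chains (relation_of (\<lambda>X Y. Y \<subseteq> X) A)"
    show "\<exists>U\<in>A. \<forall>K\<in>\<C>. U \<subseteq> K"
    proof (cases "\<C> = {}")
      case True
      then show ?thesis using assms A_def by blast
    next
      case False
      have "\<Inter>\<C> \<in> A"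
        unfolding A_def mem_Collect_eq
        by (rule compact_invariant_Inter_chain[OF False])
          (use \<C> Chains_relation_of in \<open>auto simp: A_def Chains_def relation_of_def\<close>)
      then show ?thesis by blast
    qed
  qed
  then show thesis using that A_def by blast
qed

lemma Some_image_vimage_eq: "None \<notin> L \<Longrightarrow> Some ` (Some -` L) = L"
proof (intro subset_antisym subsetI)
  fix x assume "None \<notin> L" "x \<in> L"
  then obtain z where "x = Some z" by (cases x) auto
  with \<open>x \<in> L\<close> show "x \<in> Some ` (Some -` L)" by blast
qed auto

lemma invariant_compact_Some_image_iff:
  fixes F :: "(complex \<Rightarrow> complex) set"
  shows "invariant_compact (gen_semigroup (map_option ` F)) (Some ` K) \<longleftrightarrow> compact_invariant F K"
proof -
  have "map_option f ` Some ` K \<subseteq> Some ` K \<longleftrightarrow> f ` K \<subseteq> K" for f :: "complex \<Rightarrow> complex"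
    by (auto simp: image_image)
  moreover have "sphere_compact (Some ` K) \<longleftrightarrow> compact K"
    by (auto simp: sphere_compact_def inj_vimage_image_eq)
  ultimately show ?thesis
    by (simp add: invariant_compact_def compact_invariant_def gen_semigroup_image_subset_iff)
qed

lemma planar_minimal_set_exists_iff:
  fixes F :: "(complex \<Rightarrow> complex) set"
  shows "(\<exists>L. planar_minimal_set (gen_semigroup (map_option ` F)) L) \<longleftrightarrow> (\<exists>K. compact_invariant F K)"
proof
  assume "\<exists>L. planar_minimal_set (gen_semigroup (map_option ` F)) L"
  then obtain L where "invariant_compact (gen_semigroup (map_option ` F)) L" "None \<notin> L"
    by (auto simp: planar_minimal_set_def minimal_set_def)
  then show "\<exists>K. compact_invariant F K"
    by (metis Some_image_vimage_eq invariant_compact_Some_image_iff)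
next
  assume "\<exists>K. compact_invariant F K"
  then obtain M where M: "compact_invariant F M"
    and M_min: "\<And>M'. compact_invariant F M' \<Longrightarrow> M' \<subseteq> M \<Longrightarrow> M' = M"
    using compact_invariant_minimal_exists by metis
  have "planar_minimal_set (gen_semigroup (map_option ` F)) (Some ` M)"
    unfolding planar_minimal_set_def minimal_set_def
  proof (intro conjI allI impI)
    fix L' assume L': "invariant_compact (gen_semigroup (map_option ` F)) L' \<and> L' \<subseteq> Some ` M"
    then have L'_eq: "Some ` (Some -` L') = L'"
      by (intro Some_image_vimage_eq) blast
    then have "compact_invariant F (Some -` L')"
      using L' invariant_compact_Some_image_iff by metis
    moreover have "Some -` L' \<subseteq> M"
      using L' by auto
    ultimately show "L' = Some ` M"
      using M_min L'_eq by metis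
  qed (use M invariant_compact_Some_image_iff in auto)
  then show "\<exists>L. planar_minimal_set (gen_semigroup (map_option ` F)) L" ..
qed

definition quadratic_family :: "complex \<Rightarrow> real \<Rightarrow> (complex \<Rightarrow> complex) set" where
  "quadratic_family c r = {\<lambda>z. z\<^sup>2 + a | a. cmod (a - c) \<le> r}"

lemma Gcr_eq_gen_semigroup_quadratic_family:
  "Gcr c r = gen_semigroup (map_option ` quadratic_family c r)"
  unfolding Gcr_def quadratic_family_def fhat_def by (auto intro!: arg_cong[where f = gen_semigroup])

lemma quadratic_family_shift_subset:
  "quadratic_family c' (r - cmod (c - c')) \<subseteq> quadratic_family c r"
proof
  fix f assume "f \<in> quadratic_family c' (r - cmod (c - c'))"
  then obtain a where f: "f = (\<lambda>z. z\<^sup>2 + a)" and a: "cmod (a - c') \<le> r - cmod (c - c')"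
    by (auto simp: quadratic_family_def)
  have "cmod (a - c) \<le> (r - cmod (c - c')) + cmod (c' - c)"
    using a by (rule norm_diff_triangle_le) simp
  then show "f \<in> quadratic_family c r"
    by (auto simp: quadratic_family_def f norm_minus_commute)
qed

lemma ex_compact_invariant_quadratic_family_zero: "\<exists>K. compact_invariant (quadratic_family c 0) K"
proof -
  define z where "z = (1 + csqrt (1 - 4 * c)) / 2" \<comment> \<open>a root of \<open>z\<^sup>2 - z + c\<close>\<close>
  have "z\<^sup>2 + c = z"
    unfolding z_def by (simp add: power2_eq_square field_simps) (simp add: algebra_simps flip: power2_eq_square)
  then have "compact_invariant (quadratic_family c 0) {z}"
    by (auto simp: compact_invariant_def quadratic_family_def)
  then show ?thesis ..
qed

lemma norm_le_of_norm_square_add_le: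
  fixes z c :: complex
  assumes "cmod (z\<^sup>2 + c) \<le> cmod z"
  shows "cmod z \<le> 1 + cmod c"
proof (rule ccontr)
  assume "\<not> cmod z \<le> 1 + cmod c"
  then have "cmod z * (1 + cmod c) < cmod z * cmod z"
    by (intro mult_strict_left_mono) auto
  moreover have "cmod c \<le> cmod z * cmod c"
    using \<open>\<not> cmod z \<le> 1 + cmod c\<close> mult_right_mono[of 1 "cmod z" "cmod c"] by simp
  moreover have "cmod z * cmod z \<le> cmod (z\<^sup>2 + c) + cmod c"
    using norm_triangle_ineq2[of "z\<^sup>2" "- c"] by (simp add: norm_mult power2_eq_square)
  ultimately show False
    using assms by (simp add: algebra_simps)
qed

lemma compact_invariant_quadratic_family_radius_le:
  assumes "compact_invariant (quadratic_family c r) K"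
  shows "r \<le> 1 + cmod c"
proof (cases "r \<ge> 0")
  case False
  then show ?thesis using norm_ge_zero[of c] by linarith
next
  case True
  have K: "compact K" "K \<noteq> {}"
    using assms by (auto simp: compact_invariant_def)
  from distance_attains_sup[OF K, of 0]
  obtain z where "z \<in> K" and "\<forall>y\<in>K. dist 0 y \<le> dist 0 z" ..
  then have z_max: "\<And>y. y \<in> K \<Longrightarrow> cmod y \<le> cmod z"
    by simp
  have image_le: "cmod (z\<^sup>2 + a) \<le> cmod z" if "cmod (a - c) \<le> r" for a
  proof -
    have "(\<lambda>z. z\<^sup>2 + a) \<in> quadratic_family c r"
      using that by (auto simp: quadratic_family_def)
    then have "(\<lambda>z. z\<^sup>2 + a) ` K \<subseteq> K"
      using assms by (simp add: compact_invariant_def)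
    then show ?thesis
      using \<open>z \<in> K\<close> z_max by blast
  qed
  \<comment> \<open>\<open>f\<^sub>c\<^sub>+\<^sub>r(z)\<close> and \<open>f\<^sub>c\<^sub>-\<^sub>r(z)\<close> are \<open>2r\<close> apart, but both lie in the disc of radius \<open>|z|\<close>\<close>
  have "2 * r = cmod ((z\<^sup>2 + (c + of_real r)) - (z\<^sup>2 + (c - of_real r)))"
    using True by simp
  also have "\<dots> \<le> cmod (z\<^sup>2 + (c + of_real r)) + cmod (z\<^sup>2 + (c - of_real r))"
    by (rule norm_triangle_ineq4)
  also have "\<dots> \<le> 2 * cmod z"
    using image_le[of "c + of_real r"] image_le[of "c - of_real r"] True by (simp add: abs_of_nonneg)
  finally have "r \<le> cmod z" by simp
  also have "cmod z \<le> 1 + cmod c"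
    by (rule norm_le_of_norm_square_add_le) (use image_le[of c] True in simp)
  finally show ?thesis .
qed

definition admissible_radii :: "complex \<Rightarrow> real set" where
  "admissible_radii c = {r. r \<ge> 0 \<and> (\<exists>K. compact_invariant (quadratic_family c r) K)}"

lemma r_bif_eq_Sup_admissible_radii: "r_bif c = Sup (admissible_radii c)"
  unfolding r_bif_def admissible_radii_def Gcr_eq_gen_semigroup_quadratic_family
    planar_minimal_set_exists_iff ..

lemma zero_in_admissible_radii: "0 \<in> admissible_radii c"
  using ex_compact_invariant_quadratic_family_zero by (simp add: admissible_radii_def)

lemma bdd_above_admissible_radii: "bdd_above (admissible_radii c)"
  unfolding admissible_radii_def bdd_above_def
  using compact_invariant_quadratic_family_radius_le by blast

lemma admissible_radii_shift:
  assumes "r \<in> admissible_radii c" "cmod (c - c') \<le> r"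
  shows "r - cmod (c - c') \<in> admissible_radii c'"
proof -
  obtain K where "compact_invariant (quadratic_family c r) K"
    using assms(1) by (auto simp: admissible_radii_def)
  then have "compact_invariant (quadratic_family c' (r - cmod (c - c'))) K"
    by (rule compact_invariant_mono[OF _ quadratic_family_shift_subset])
  then show ?thesis
    using assms(2) by (auto simp: admissible_radii_def)
qed

lemma r_bif_le_add_dist: "r_bif c \<le> r_bif c' + cmod (c - c')"
  unfolding r_bif_eq_Sup_admissible_radii
proof (rule cSup_least)
  show "admissible_radii c \<noteq> {}"
    using zero_in_admissible_radii by blast
next
  fix r assume r: "r \<in> admissible_radii c"
  show "r \<le> Sup (admissible_radii c') + cmod (c - c')"
  proof (cases "cmod (c - c') \<le> r")
    case True
    then have "r - cmod (c - c') \<le> Sup (admissible_radii c')"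
      by (intro cSup_upper admissible_radii_shift r bdd_above_admissible_radii)
    then show ?thesis by simp
  next
    case False
    have "0 \<le> Sup (admissible_radii c')"
      by (intro cSup_upper zero_in_admissible_radii bdd_above_admissible_radii)
    with False show ?thesis by simp
  qed
qed

theorem theorem4p10:
  fixes c c' :: complex
  shows "\<bar>r_bif c - r_bif c'\<bar> \<le> cmod (c - c')"
  using r_bif_le_add_dist[of c c'] r_bif_le_add_dist[of c' c]
  by (simp add: norm_minus_commute abs_le_iff)

end
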